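(* Let $\alpha>0$, $T:=T(\alpha)$, and let $\varphi_1,\dots,\varphi_T$ be positive reals with $\frac{T+1}{T}\le\varphi_k\le\frac{T}{T-1}$ for all $k$ (the upper bound being void when $T=1$) and $\prod_{j=1}^T\varphi_j=T/\alpha$; extend periodically by $\varphi_{T+j}:=\varphi_j$ for all $j\ge1$. Set $\psi_i:=\prod_{j=1}^i\varphi_j$ (with $\psi_0=1$) and $$a_t:=\max\Big\{\tfrac{T-i+t-1}{\alpha}\psi_i:\ 0\le i<T\Big\},\qquad t\ge1.$$ Let $(\chi_t)_{t\ge1}$ be defined by $\chi_t:=\max\{a_t,\frac{t-1}{\alpha}\chi_1,\dots,\frac1\alpha\chi_{t-1}\}$. Then $\chi_t=\psi_{t+T-1}=\prod_{j=1}^{t+T-1}\varphi_j$ for all $t\ge1$.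
   Context: For $\alpha>0$, let $T=T(\alpha)\in\mathbb N$ be the unique positive integer with $\frac{(T-1)^T}{T^{T-1}}<\alpha\le\frac{T^{T+1}}{(T+1)^T}$, and define $\nu(\alpha):=\frac1T\log\frac T\alpha$. *)

theory Defs
  imports Complex_Main
begin

definition T_of :: "real \<Rightarrow> nat" where
  "T_of \<alpha> = (THE T. T > 0 \<and>
      (real T - 1) ^ T / real T ^ (T - 1) < \<alpha> \<and>
      \<alpha> \<le> real T ^ (T + 1) / (real T + 1) ^ T)"

end

theory Submission
  imports Defs
begin

text \<open>Periodicity gives \<open>\<psi> (n + T) = T/\<alpha> \<cdot> \<psi> n\<close>, and the bounds on
  \<open>\<phi>\<close> together with Bernoulli's inequality give \<open>k/\<alpha> \<cdot> \<psi> m \<le> \<psi> (m + k)\<close> for all \<open>m, k\<close>: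
  for \<open>k \<ge> T\<close> from \<open>\<psi> (m + k) \<ge> T/\<alpha> \<cdot> ((T+1)/T)^(k-T) \<cdot> \<psi> m\<close>, for \<open>k < T\<close> from
  \<open>T/\<alpha> \<cdot> \<psi> m = \<psi> (m + T) \<le> (T/(T-1))^(T-k) \<cdot> \<psi> (m + k)\<close>. By strong induction on \<open>t\<close>,
  \<open>\<psi> (t + T - 1)\<close> then bounds every candidate in the maximum defining \<open>\<chi> t\<close>, and it is
  attained: by the term \<open>i = t - 1\<close> of \<open>a t\<close> if \<open>t \<le> T\<close>, and by \<open>T/\<alpha> \<cdot> \<chi> (t - T)\<close> otherwise.\<close>

lemma prod_atLeastAtMost_add:
  fixes f :: "nat \<Rightarrow> 'a::comm_monoid_mult" and m k :: nat
  shows "(\<Prod>j=1..m + k. f j) = (\<Prod>j=1..m. f j) * (\<Prod>j=1..k. f (m + j))"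
  by (induction k) (simp_all add: prod.cl_ivl_Suc ac_simps)

lemma prod_lower_power:
  fixes f :: "nat \<Rightarrow> real"
  assumes "0 \<le> c" and "\<And>j. 1 \<le> j \<Longrightarrow> c \<le> f j"
  shows "(\<Prod>j=1..m. f j) * c ^ k \<le> (\<Prod>j=1..m + k. f j)"
proof -
  have "0 \<le> (\<Prod>j=1..m. f j)"
    using assms by (intro prod_nonneg) (auto intro: order_trans)
  moreover have "c ^ k \<le> (\<Prod>j=1..k. f (m + j))"
    using prod_mono[of "{1..k}" "\<lambda>_. c" "\<lambda>j. f (m + j)"] assms by simp
  ultimately show ?thesis
    unfolding prod_atLeastAtMost_add[of f m k] by (simp add: mult_left_mono)
qed

lemma prod_upper_power:
  fixes f :: "nat \<Rightarrow> real"
  assumes "\<And>j. 1 \<le> j \<Longrightarrow> 0 \<le> f j \<and> f j \<le> c"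
  shows "(\<Prod>j=1..m + k. f j) \<le> (\<Prod>j=1..m. f j) * c ^ k"
proof -
  have "0 \<le> (\<Prod>j=1..m. f j)"
    using assms by (intro prod_nonneg) auto
  moreover have "(\<Prod>j=1..k. f (m + j)) \<le> c ^ k"
    using prod_mono[of "{1..k}" "\<lambda>j. f (m + j)" "\<lambda>_. c"] assms by simp
  ultimately show ?thesis
    unfolding prod_atLeastAtMost_add[of f m k] by (simp add: mult_left_mono)
qed

lemma prod_add_period:
  fixes f :: "nat \<Rightarrow> 'a::comm_monoid_mult" and T n :: nat
  assumes "\<And>j. 1 \<le> j \<Longrightarrow> f (T + j) = f j"
  shows "(\<Prod>j=1..T + n. f j) = (\<Prod>j=1..T. f j) * (\<Prod>j=1..n. f j)"
  unfolding prod_atLeastAtMost_add[of f T n] using assms by (intro arg_cong2[where f = "(*)"] prod.cong) auto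

lemma periodic_extension:
  fixes T j :: nat
  assumes "0 < T" and "\<And>j. 1 \<le> j \<Longrightarrow> f (T + j) = f j"
    and "\<And>k. k \<in> {1..T} \<Longrightarrow> P (f k)" and "1 \<le> j"
  shows "P (f j)"
  using \<open>1 \<le> j\<close>
proof (induction j rule: less_induct)
  case (less j)
  show ?case
  proof (cases "j \<le> T")
    case True
    with less.prems assms(3) show ?thesis by simp
  next
    case False
    then have "f j = f (j - T)"
      using assms(2)[of "j - T"] by simp
    with less.IH[of "j - T"] False \<open>0 < T\<close> show ?thesis by simp
  qed
qed

lemma one_plus_div_le_power:
  fixes x :: real
  assumes "0 < x"
  shows "1 + real k / x \<le> ((x + 1) / x) ^ k"
proof -
  have "1 + real k * (1 / x) \<le> (1 + 1 / x) ^ k"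
    using assms by (intro Bernoulli_inequality) (simp add: order_trans[of _ 0])
  with assms show ?thesis by (simp add: add_divide_distrib)
qed

lemma one_minus_div_le_power:
  fixes x :: real
  assumes "1 \<le> x"
  shows "1 - real s / x \<le> ((x - 1) / x) ^ s"
proof -
  have "1 + real s * (- 1 / x) \<le> (1 + - 1 / x) ^ s"
    using assms by (intro Bernoulli_inequality) simp
  with assms show ?thesis by (simp add: diff_divide_distrib)
qed

locale periodic_weights =
  fixes T :: nat and \<alpha> :: real and \<phi> :: "nat \<Rightarrow> real"
  assumes T_pos: "0 < T"
    and phi_lower: "\<And>j. 1 \<le> j \<Longrightarrow> (real T + 1) / real T \<le> \<phi> j"
    and phi_upper: "\<And>j. 2 \<le> T \<Longrightarrow> 1 \<le> j \<Longrightarrow> \<phi> j \<le> real T / (real T - 1)"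
    and prod_period: "(\<Prod>j=1..T. \<phi> j) = real T / \<alpha>"
    and phi_periodic: "\<And>j. 1 \<le> j \<Longrightarrow> \<phi> (T + j) = \<phi> j"
begin

lemma phi_pos: "1 \<le> j \<Longrightarrow> 0 < \<phi> j"
  using phi_lower[of j] T_pos by (smt (verit) divide_pos_pos of_nat_0_less_iff)

lemma prod_pos: "0 < (\<Prod>j=1..n. \<phi> j)"
  using phi_pos by (intro prod_pos) auto

lemma prod_shift_period: "(\<Prod>j=1..n + T. \<phi> j) = real T / \<alpha> * (\<Prod>j=1..n. \<phi> j)"
  using prod_add_period[of \<phi> T n] phi_periodic prod_period by (simp add: add.commute)

lemma prod_shift_ge_period:
  assumes "T \<le> k"
  shows "real k / \<alpha> * (\<Prod>j=1..m. \<phi> j) \<le> (\<Prod>j=1..m + k. \<phi> j)"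
proof -
  have T_div_alpha: "0 < real T / \<alpha>"
    using prod_pos[of T] prod_period by simp
  have "real k / \<alpha> = real T / \<alpha> * (1 + real (k - T) / real T)"
    using assms T_pos by (simp add: field_simps of_nat_diff)
  also have "\<dots> * (\<Prod>j=1..m. \<phi> j)
      = real T / \<alpha> * ((1 + real (k - T) / real T) * (\<Prod>j=1..m. \<phi> j))"
    by (simp only: mult.assoc)
  also have "\<dots> \<le> real T / \<alpha> * ((\<Prod>j=1..m. \<phi> j) * ((real T + 1) / real T) ^ (k - T))"
    using one_plus_div_le_power[of "real T" "k - T"] T_pos T_div_alpha prod_pos[of m]
    by (intro mult_left_mono) (auto simp: mult.commute)
  also have "\<dots> \<le> real T / \<alpha> * (\<Prod>j=1..m + (k - T). \<phi> j)"
    using prod_lower_power[of "(real T + 1) / real T" \<phi> m "k - T"] phi_lower T_div_alpha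
    by (intro mult_left_mono) auto
  also have "\<dots> = (\<Prod>j=1..m + k. \<phi> j)"
    using prod_shift_period[of "m + (k - T)"] assms by simp
  finally show ?thesis .
qed

lemma prod_shift_less_period:
  assumes "k < T"
  shows "real k / \<alpha> * (\<Prod>j=1..m. \<phi> j) \<le> (\<Prod>j=1..m + k. \<phi> j)"
proof (cases "k = 0")
  case True
  then show ?thesis using prod_pos[of m] by simp
next
  case False
  with assms have T2: "2 \<le> T" by simp
  define s where "s = T - k"
  have ratio_inverse: "((real T - 1) / real T) ^ s * (real T / (real T - 1)) ^ s = 1"
    using T2 by (simp flip: power_mult_distrib)
  have "real k / \<alpha> * (\<Prod>j=1..m. \<phi> j)
      = (1 - real s / real T) * (\<Prod>j=1..m + T. \<phi> j)"
    using prod_shift_period[of m] assms T_pos by (simp add: s_def field_simps of_nat_diff)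
  also have "\<dots> \<le> ((real T - 1) / real T) ^ s * (\<Prod>j=1..(m + k) + s. \<phi> j)"
    using one_minus_div_le_power[of "real T" s] T_pos prod_pos[of "m + T"] assms
    by (simp add: s_def mult_right_mono)
  also have "\<dots> \<le> ((real T - 1) / real T) ^ s * ((\<Prod>j=1..m + k. \<phi> j) * (real T / (real T - 1)) ^ s)"
    using prod_upper_power[of \<phi> "real T / (real T - 1)" "m + k" s] phi_upper[OF T2]
      phi_pos T2
    by (intro mult_left_mono) (auto simp: less_imp_le)
  also have "\<dots> = (\<Prod>j=1..m + k. \<phi> j)"
    using ratio_inverse by (simp add: ac_simps)
  finally show ?thesis .
qed

lemma prod_shift_bound: "real k / \<alpha> * (\<Prod>j=1..m. \<phi> j) \<le> (\<Prod>j=1..m + k. \<phi> j)"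
  using prod_shift_ge_period prod_shift_less_period by (cases "T \<le> k") auto

end

lemma max_recurrence_solution:
  fixes \<psi> \<chi> :: "nat \<Rightarrow> real" and \<alpha> :: real and T :: nat
  assumes "0 < T"
    and shift_period: "\<And>n. \<psi> (n + T) = real T / \<alpha> * \<psi> n"
    and shift_bound: "\<And>m k. real k / \<alpha> * \<psi> m \<le> \<psi> (m + k)"
    and chi_rec: "\<And>t. 1 \<le> t \<Longrightarrow> \<chi> t =
        Max ({Max {(real T - real i + real t - 1) / \<alpha> * \<psi> i | i. i < T}}
             \<union> {real (t - j) / \<alpha> * \<chi> j | j. j \<in> {1..<t}})"
    and "1 \<le> t"
  shows "\<chi> t = \<psi> (t + T - 1)"
  using \<open>1 \<le> t\<close>
proof (induction t rule: less_induct)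
  case (less t)
  define x where "x = \<psi> (t + T - 1)"
  define A where "A = (\<lambda>i. (real T - real i + real t - 1) / \<alpha> * \<psi> i) ` {..<T}"
  define B where "B = (\<lambda>j. real (t - j) / \<alpha> * \<chi> j) ` {1..<t}"
  have "{(real T - real i + real t - 1) / \<alpha> * \<psi> i | i. i < T} = A"
    by (auto simp: A_def)
  moreover have "{real (t - j) / \<alpha> * \<chi> j | j. j \<in> {1..<t}} = B"
    unfolding B_def by blast
  ultimately have chi_t: "\<chi> t = Max ({Max A} \<union> B)"
    using chi_rec[OF less.prems] by simp
  have A_fin: "finite A" "A \<noteq> {}"
    using \<open>0 < T\<close> by (auto simp: A_def)
  have A_le: "a \<le> x" if "a \<in> A" for a
  proof -
    obtain i where i: "i < T" "a = (real T - real i + real t - 1) / \<alpha> * \<psi> i"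
      using \<open>a \<in> A\<close> by (auto simp: A_def)
    then have "real T - real i + real t - 1 = real (t + T - 1 - i)"
      using less.prems by (simp add: of_nat_diff)
    with i shift_bound[of "t + T - 1 - i" i] less.prems show ?thesis
      by (simp add: x_def)
  qed
  have B_le: "b \<le> x" if "b \<in> B" for b
  proof -
    obtain j where j: "j \<in> {1..<t}" "b = real (t - j) / \<alpha> * \<chi> j"
      using \<open>b \<in> B\<close> by (auto simp: B_def)
    with less.IH[of j] shift_bound[of "t - j" "j + T - 1"] \<open>0 < T\<close> show ?thesis
      by (simp add: x_def add.commute)
  qed
  have x_attained: "x \<in> {Max A} \<union> B"
  proof (cases "t \<le> T")
    case True
    have "(real T - real (t - 1) + real t - 1) / \<alpha> * \<psi> (t - 1) = x"
      using True less.prems shift_period[of "t - 1"] by (simp add: x_def of_nat_diff)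
    moreover have "(real T - real (t - 1) + real t - 1) / \<alpha> * \<psi> (t - 1) \<in> A"
      unfolding A_def by (intro imageI) (use True less.prems in simp)
    ultimately have "Max A = x"
      using A_fin A_le by (intro Max_eqI) auto
    then show ?thesis by simp
  next
    case False
    have "real (t - (t - T)) / \<alpha> * \<chi> (t - T) \<in> B"
      unfolding B_def by (intro imageI) (use False \<open>0 < T\<close> in simp)
    moreover have "real (t - (t - T)) / \<alpha> * \<chi> (t - T) = x"
      using False less.IH[of "t - T"] shift_period[of "t - 1"] \<open>0 < T\<close>
      by (simp add: x_def add.commute)
    ultimately show ?thesis by simp
  qed
  have "Max A \<le> x"
    using A_fin A_le by simp
  moreover have "finite B"
    by (simp add: B_def)
  ultimately have "Max ({Max A} \<union> B) = x"
    using B_le x_attained by (intro Max_eqI) auto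
  with chi_t show ?case by (simp add: x_def)
qed

theorem proposition2:
  fixes \<alpha> :: real and \<phi> :: "nat \<Rightarrow> real" and \<chi> :: "nat \<Rightarrow> real" and T :: nat
  assumes alpha_pos: "\<alpha> > 0"
    and T_def: "T = T_of \<alpha>"
    and phi_pos: "\<forall>k\<in>{1..T}. \<phi> k > 0"
    and phi_lower: "\<forall>k\<in>{1..T}. (real T + 1) / real T \<le> \<phi> k"
    and phi_upper: "T \<ge> 2 \<longrightarrow> (\<forall>k\<in>{1..T}. \<phi> k \<le> real T / (real T - 1))"
    and phi_prod: "(\<Prod>j=1..T. \<phi> j) = real T / \<alpha>"
    and phi_periodic: "\<forall>j\<ge>1. \<phi> (T + j) = \<phi> j"
    and chi_rec: "\<forall>t\<ge>1. \<chi> t =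
        Max ({Max {(real T - real i + real t - 1) / \<alpha> * (\<Prod>j=1..i. \<phi> j) | i. i < T}}
             \<union> {real (t - j) / \<alpha> * \<chi> j | j. j \<in> {1..<t}})"
  shows "\<forall>t\<ge>1. \<chi> t = (\<Prod>j=1..t + T - 1. \<phi> j)"
proof -
  have T_pos: "0 < T"
    using phi_prod by (cases T) auto
  have phi_bounds:
    "(real T + 1) / real T \<le> \<phi> j \<and> (2 \<le> T \<longrightarrow> \<phi> j \<le> real T / (real T - 1))"
    if "1 \<le> j" for j
    using periodic_extension[OF T_pos, of \<phi>
        "\<lambda>y. (real T + 1) / real T \<le> y \<and> (2 \<le> T \<longrightarrow> y \<le> real T / (real T - 1))" j]
      phi_periodic phi_lower phi_upper that by auto
  interpret periodic_weights T \<alpha> \<phi>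
    using T_pos phi_bounds phi_prod phi_periodic by unfold_locales auto
  have "\<chi> t = (\<Prod>j=1..t + T - 1. \<phi> j)" if "1 \<le> t" for t
    using max_recurrence_solution[OF T_pos prod_shift_period prod_shift_bound _ that]
      chi_rec by blast
  then show ?thesis by blast
qed

end
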